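(* Let $(Q,\rightarrow)$ be a finite transition system and $\mathscr{R}$ a preorder on $Q$. Among all equivalence relations $\mathscr{P}$ on $Q$ with $\mathscr{P}\subseteq\mathscr{R}$ and $\mathscr{P}\circ\rightarrow^{-1}\subseteq\rightarrow^{-1}\circ\mathscr{R}$ (the $\mathscr{R}$-stable equivalence relations), there is a coarsest one, i.e. one containing all the others.
   Context: For relations on $Q$: $\mathscr{R}^{-1}=\{(y,x)\mid(x,y)\in\mathscr{R}\}$, $\mathscr{R}(X)=\{q'\mid\exists q\in X,\ q\,\mathscr{R}\,q'\}$, and $\mathscr{S}\circ\mathscr{R}=\{(x,y)\mid y\in\mathscr{S}(\mathscr{R}(x))\}$. A preorder is a reflexive transitive relation. A relation is coarser than another if it contains it. *)

theory Defs
  imports Main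
begin

text \<open>Paper's composition: S \<circ> R = {(x,y). y \<in> S(R(x))}, i.e. first R then S,
  which is Isabelle's relcomp R O S.  So P \<circ> T^-1 = T^-1 O P and
  T^-1 \<circ> R = R O T^-1.\<close>

definition R_stable :: "('q \<times> 'q) set \<Rightarrow> ('q \<times> 'q) set \<Rightarrow> ('q \<times> 'q) set \<Rightarrow> bool" where
  "R_stable T R P \<longleftrightarrow> equiv UNIV P \<and> P \<subseteq> R \<and> (T\<inverse> O P) \<subseteq> (R O T\<inverse>)"

end

theory Submission
  imports Defs
begin

text \<open>The union of all \<open>R\<close>-stable equivalences still satisfies the stability inclusion,
  which distributes over unions, and is symmetric and contained in \<open>R\<close>. Its reflexive
  transitive closure is therefore an equivalence, and it stays inside the preorder \<open>R\<close> and
  keeps the stability inclusion because \<open>R\<close> is reflexive and transitive.\<close>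

lemma rtrancl_subset_preorder:
  assumes "refl R" "trans R" "P \<subseteq> R"
  shows "P\<^sup>* \<subseteq> R"
proof (rule subrelI)
  fix x y assume "(x, y) \<in> P\<^sup>*"
  then show "(x, y) \<in> R"
    by (induction rule: rtrancl_induct)
       (use assms in \<open>auto simp: refl_on_def dest: transD\<close>)
qed

lemma relcomp_rtrancl_subset:
  assumes "refl R" "trans R" and sim: "S O P \<subseteq> R O S"
  shows "S O P\<^sup>* \<subseteq> R O S"
proof -
  have "(x, y) \<in> R O S" if "(z, y) \<in> P\<^sup>*" "(x, z) \<in> S" for x y z
    using that(1)
  proof (induction y rule: rtrancl_induct)
    case base
    then show ?case using \<open>refl R\<close> \<open>(x, z) \<in> S\<close> by (auto simp: refl_on_def)
  next
    case (step y y')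
    then obtain w where "(x, w) \<in> R" "(w, y) \<in> S" by blast
    with \<open>(y, y') \<in> P\<close> sim obtain w' where "(w, w') \<in> R" "(w', y') \<in> S" by blast
    with \<open>(x, w) \<in> R\<close> \<open>trans R\<close> show ?case by (blast dest: transD)
  qed
  then show ?thesis by blast
qed

lemma R_stable_rtrancl_Union:
  assumes "refl R" "trans R"
  shows "R_stable T R ((\<Union>{P. R_stable T R P})\<^sup>*)"
proof -
  define U where "U = \<Union>{P. R_stable T R P}"
  have "sym U" unfolding U_def R_stable_def equiv_def sym_def by blast
  have "U \<subseteq> R" unfolding U_def R_stable_def by blast
  have "T\<inverse> O U \<subseteq> R O T\<inverse>" unfolding U_def R_stable_def by blast
  have "R_stable T R (U\<^sup>*)"
    unfolding R_stable_def equiv_def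
    using \<open>sym U\<close> rtrancl_subset_preorder[OF assms \<open>U \<subseteq> R\<close>]
      relcomp_rtrancl_subset[OF assms \<open>T\<inverse> O U \<subseteq> R O T\<inverse>\<close>]
    by (simp add: refl_rtrancl trans_rtrancl sym_rtrancl)
  then show ?thesis unfolding U_def .
qed

theorem proposition2:
  fixes T :: "('q::finite \<times> 'q) set" and R :: "('q \<times> 'q) set"
  assumes "refl R" and "trans R"
  shows "\<exists>P. R_stable T R P \<and> (\<forall>P'. R_stable T R P' \<longrightarrow> P' \<subseteq> P)"
proof (intro exI conjI allI impI)
  show "R_stable T R ((\<Union>{P. R_stable T R P})\<^sup>*)"
    using assms by (rule R_stable_rtrancl_Union)
  show "P' \<subseteq> (\<Union>{P. R_stable T R P})\<^sup>*" if "R_stable T R P'" for P'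
    using that by blast
qed

end
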